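(* Let $M$ be a finite monoid such that for all $x,y\in M$, either $R(x)\subseteq R(xy)$ or $R(y)\subseteq R(xy)$. Then there exists $k\ge2$ such that $x^k=x$ for all $x\in M$.
   Context: For $m$ in a monoid $M$, $R(m)=\{my: y\in M\}$ is the right ideal of $m$. *)

theory Defs
  imports Main
begin

definition right_ideal :: "'a::monoid_mult \<Rightarrow> 'a set" where
  "right_ideal m = {m * y | y. True}"

end

theory Submission
  imports Defs
begin

text \<open>Taking \<open>x = y\<close> in the hypothesis gives \<open>x \<in> x^2 M\<close>, hence \<open>x \<in> x^n M\<close> for
  every \<open>n \<ge> 1\<close>. By finiteness some power repeats, \<open>x^a = x^(a + d)\<close> with \<open>d \<ge> 1\<close>, and
  writing \<open>x = x^a y\<close> turns this into \<open>x = x^(d + 1)\<close>. Then \<open>x = x^(j d + 1)\<close> for all \<open>j\<close>,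
  so the product \<open>N\<close> of these periods over the finitely many elements gives the uniform
  exponent \<open>k = N + 1\<close>.\<close>

lemma right_ideal_subset_iff:
  "right_ideal x \<subseteq> right_ideal y \<longleftrightarrow> (\<exists>z. x = y * z)"
proof
  assume "right_ideal x \<subseteq> right_ideal y"
  moreover have "x \<in> right_ideal x"
    unfolding right_ideal_def by (metis (mono_tags) mem_Collect_eq mult_1_right)
  ultimately show "\<exists>z. x = y * z"
    unfolding right_ideal_def by blast
next
  assume "\<exists>z. x = y * z"
  then show "right_ideal x \<subseteq> right_ideal y"
    unfolding right_ideal_def by (auto simp: mult.assoc)
qed

lemma right_divisible_by_powers:
  fixes x :: "'a::monoid_mult"
  assumes "x = x * x * z"
  shows "\<exists>y. x = x ^ Suc n * y"
proof (induction n)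
  case 0
  show ?case by (rule exI[of _ 1]) simp
next
  case (Suc n)
  then obtain y where "x = x ^ Suc n * y" by blast
  also have "x ^ Suc n = x ^ n * (x * x * z)"
    by (simp only: power_Suc2 flip: assms)
  also have "\<dots> = x ^ Suc (Suc n) * z"
    by (simp only: power_Suc2 mult.assoc)
  finally have "x = x ^ Suc (Suc n) * (z * y)"
    by (simp add: mult.assoc)
  then show ?case by blast
qed

lemma finite_power_period:
  fixes x :: "'a::monoid_mult"
  assumes fin: "finite (UNIV :: 'a set)" and "x = x * x * z"
  shows "\<exists>d\<ge>1. x ^ Suc d = x"
proof -
  have "\<not> inj (\<lambda>n. x ^ Suc n)"
    using fin finite_imageD infinite_UNIV_nat finite_subset subset_UNIV by metis
  then obtain a b where "a < b" and repeat: "x ^ Suc b = x ^ Suc a"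
    unfolding inj_def by (metis linorder_neqE_nat)
  define d where "d = b - a"
  from \<open>a < b\<close> have "d \<ge> 1" and b: "Suc b = d + Suc a"
    unfolding d_def by auto
  obtain y where y: "x = x ^ Suc a * y"
    using right_divisible_by_powers[OF assms(2)] by blast
  have "x ^ Suc d = x ^ d * x"
    by (rule power_Suc2)
  also have "\<dots> = x ^ d * (x ^ Suc a * y)"
    by (simp only: flip: y)
  also have "\<dots> = x ^ Suc b * y"
    by (simp only: b power_add mult.assoc)
  also have "\<dots> = x"
    by (simp only: repeat flip: y)
  finally show ?thesis
    using \<open>d \<ge> 1\<close> by blast
qed

lemma power_period_mult:
  fixes x :: "'a::monoid_mult"
  assumes "x ^ Suc d = x"
  shows "x ^ Suc (j * d) = x"
proof (induction j)
  case 0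
  show ?case by simp
next
  case (Suc j)
  have "x ^ Suc (Suc j * d) = x ^ Suc (j * d) * x ^ d"
    unfolding power_add[symmetric] by (simp add: algebra_simps)
  also have "\<dots> = x ^ Suc d"
    using Suc by simp
  finally show ?case
    using assms by simp
qed

lemma finite_uniform_power_period:
  fixes p :: "'a::monoid_mult \<Rightarrow> nat"
  assumes "finite (UNIV :: 'a set)" and "\<And>x. p x \<ge> 1" and "\<And>x. x ^ Suc (p x) = x"
  shows "\<exists>N\<ge>1. \<forall>x::'a. x ^ Suc N = x"
proof (intro exI conjI allI)
  define N where "N = (\<Prod>x\<in>UNIV. p x)"
  show "N \<ge> 1"
    unfolding N_def using assms(2) by (simp add: Suc_le_eq prod_pos)
  fix x :: 'a
  have "p x dvd N"
    unfolding N_def using assms(1) by (simp add: dvd_prod_eqI)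
  then obtain j where "N = j * p x"
    by (metis dvd_def mult.commute)
  then show "x ^ Suc N = x"
    using power_period_mult[of x "p x" j] assms(3) by simp
qed

theorem lemmaB1:
  assumes "finite (UNIV :: 'a::monoid_mult set)"
    and "\<forall>x y :: 'a. right_ideal x \<subseteq> right_ideal (x * y) \<or> right_ideal y \<subseteq> right_ideal (x * y)"
  shows "\<exists>k::nat. k \<ge> 2 \<and> (\<forall>x :: 'a. x ^ k = x)"
proof -
  have "\<exists>z. x = x * x * z" for x :: 'a
  proof -
    have "right_ideal x \<subseteq> right_ideal (x * x)"
      using assms(2) by blast
    then show ?thesis
      by (simp add: right_ideal_subset_iff)
  qed
  then have "\<forall>x::'a. \<exists>d\<ge>1. x ^ Suc d = x"
    using finite_power_period[OF assms(1)] by blast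
  then obtain p where "\<forall>x::'a. p x \<ge> 1 \<and> x ^ Suc (p x) = x"
    by (rule choice[THEN exE])
  then obtain N where "N \<ge> 1" and "\<forall>x::'a. x ^ Suc N = x"
    using finite_uniform_power_period[OF assms(1)] by blast
  then show ?thesis
    by (intro exI[of _ "Suc N"]) auto
qed

end
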